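(* Let $\mathcal{P}\subset\mathbb{R}^3$ be a pointsymmetric convex polyhedron with radius $1$ and let $S\in\mathcal{P}$. Let $\bar\theta_1,\bar\varphi_1,\bar\theta_2,\bar\varphi_2,\bar\alpha\in\mathbb{R}$, $\varepsilon>0$, and let $w\in\mathbb{R}^2$ be a unit vector. Write $\overline{M_1}=M(\bar\theta_1,\bar\varphi_1)$, $\overline{M_2}=M(\bar\theta_2,\bar\varphi_2)$, $\overline{M_k}^\theta=M^\theta(\bar\theta_k,\bar\varphi_k)$, $\overline{M_k}^\varphi=M^\varphi(\bar\theta_k,\bar\varphi_k)$ for $k=1,2$, and set \[ G=\langle R(\bar\alpha)\overline{M_1}S,w\rangle-\varepsilon\big(|\langle R'(\bar\alpha)\overline{M_1}S,w\rangle|+|\langle R(\bar\alpha)\overline{M_1}^\theta S,w\rangle|+|\langle R(\bar\alpha)\overline{M_1}^\varphi S,w\rangle|\big)-\tfrac{9}{2}\varepsilon^2, \] \[ H_P=\langle \overline{M_2}P,w\rangle+\varepsilon\big(|\langle\overline{M_2}^\theta P,w\rangle|+|\langle\overline{M_2}^\varphi P,w\rangle|\big)+2\varepsilon^2\quad (P\in\mathcal{P}). \] If $G>\max_{P\in\mathcal{P}}H_P$, then there is no $(\theta_1,\varphi_1,\theta_2,\varphi_2,\alpha)$ with $|\theta_k-\bar\theta_k|,|\varphi_k-\bar\varphi_k|,|\alpha-\bar\alpha|\le\varepsilon$ ($k=1,2$) such that $R(\alpha)M(\theta_1,\varphi_1)\mathcal{P}\subset\operatorname{int}\operatorname{conv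}(M(\theta_2,\varphi_2)\mathcal{P})$.
   Context: $R(\alpha)=\begin{pmatrix}\cos\alpha&-\sin\alpha\\ \sin\alpha&\cos\alpha\end{pmatrix}$, $R'(\alpha)=\frac{d}{d\alpha}R(\alpha)$; $M(\theta,\varphi)=\begin{pmatrix}-\sin\theta&\cos\theta&0\\ -\cos\theta\cos\varphi&-\sin\theta\cos\varphi&\sin\varphi\end{pmatrix}$, $M^\theta=\partial_\theta M$, $M^\varphi=\partial_\varphi M$. A polyhedron is a finite non-degenerate set of points of $\mathbb{R}^3$ in convex position; pointsymmetric means $\mathcal{P}=-\mathcal{P}$; radius $1$ means $\|P\|\le1$ for all $P\in\mathcal{P}$ with equality for some $P$. Matrices act on point sets elementwise. *)

theory Defs
  imports "HOL-Analysis.Analysis"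
begin

definition rotR :: "real \<Rightarrow> real^2^2" where
  "rotR a = vector [vector [cos a, - sin a], vector [sin a, cos a]]"

definition rotR' :: "real \<Rightarrow> real^2^2" where
  "rotR' a = (\<chi> i j. deriv (\<lambda>t. rotR t $ i $ j) a)"

definition projM :: "real \<Rightarrow> real \<Rightarrow> real^3^2" where
  "projM th ph = vector [vector [- sin th, cos th, 0],
                         vector [- cos th * cos ph, - sin th * cos ph, sin ph]]"

definition projM_th :: "real \<Rightarrow> real \<Rightarrow> real^3^2" where
  "projM_th th ph = (\<chi> i j. deriv (\<lambda>t. projM t ph $ i $ j) th)"

definition projM_ph :: "real \<Rightarrow> real \<Rightarrow> real^3^2" where
  "projM_ph th ph = (\<chi> i j. deriv (\<lambda>t. projM th t $ i $ j) ph)"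

definition polyhedron :: "(real^3) set \<Rightarrow> bool" where
  "polyhedron P \<longleftrightarrow> finite P \<and> aff_dim P = 3 \<and>
     (\<forall>p\<in>P. p \<notin> convex hull (P - {p}))"

definition pointsymmetric :: "(real^3) set \<Rightarrow> bool" where
  "pointsymmetric P \<longleftrightarrow> uminus ` P = P"

definition has_radius_one :: "(real^3) set \<Rightarrow> bool" where
  "has_radius_one P \<longleftrightarrow> (\<forall>p\<in>P. norm p \<le> 1) \<and> (\<exists>p\<in>P. norm p = 1)"

end

theory Submission
  imports Defs
begin

text \<open>
  Suppose the parameters are chosen so that \<open>R(\<alpha>) M(\<theta>\<^sub>1,\<phi>\<^sub>1) \<P>\<close> lies in the
  interior of \<open>conv (M(\<theta>\<^sub>2,\<phi>\<^sub>2) \<P>)\<close>. A point in the interior of a polytope is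
  strictly beaten in every direction \<open>w\<close> by one of its vertices, so
  \<open>\<langle>R(\<alpha>) M(\<theta>\<^sub>1,\<phi>\<^sub>1) S, w\<rangle> < \<langle>M(\<theta>\<^sub>2,\<phi>\<^sub>2) Q, w\<rangle>\<close> for some \<open>Q \<in> \<P>\<close>.
  Both sides are values of \<open>f(\<alpha>,\<theta>,\<phi>) = \<langle>R(\<alpha>) M(\<theta>,\<phi>) x, w\<rangle>\<close> with
  \<open>\<parallel>x\<parallel> \<le> 1 = \<parallel>w\<parallel>\<close>. Every second partial derivative of \<open>f\<close> pairs \<open>w\<close> with a vector of
  norm at most 1, so second-order Taylor expansion along the segment from the centre of
  the parameter box bounds the remainder by \<open>(|\<Delta>\<alpha>| + |\<Delta>\<theta>| + |\<Delta>\<phi>|)\<^sup>2 / 2\<close>, i.e. by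
  \<open>9\<epsilon>\<^sup>2/2\<close> with three free parameters and \<open>2\<epsilon>\<^sup>2\<close> with two. The first-order terms are
  at most \<open>\<epsilon>\<close> times the absolute partial derivatives, so the left side is at least \<open>G\<close>
  and the right side at most \<open>H\<^sub>Q\<close>, contradicting \<open>G > max H\<^sub>P\<close>.
\<close>

lemma rotR'_eq: "rotR' a = vector [vector [- sin a, - cos a], vector [cos a, - sin a]]"
  unfolding rotR'_def rotR_def
  by (simp add: vec_eq_iff forall_2)
    (intro conjI; rule DERIV_imp_deriv; auto intro!: derivative_eq_intros)

lemma projM_th_eq:
  "projM_th th ph = vector [vector [- cos th, - sin th, 0],
                            vector [sin th * cos ph, - cos th * cos ph, 0]]"
  unfolding projM_th_def projM_def
  by (simp add: vec_eq_iff forall_2 forall_3)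
    (intro conjI; rule DERIV_imp_deriv; auto intro!: derivative_eq_intros)

lemma projM_ph_eq:
  "projM_ph th ph = vector [vector [0, 0, 0],
                            vector [cos th * sin ph, sin th * sin ph, cos ph]]"
  unfolding projM_ph_def projM_def
  by (simp add: vec_eq_iff forall_2 forall_3)
    (intro conjI; rule DERIV_imp_deriv; auto intro!: derivative_eq_intros)

lemma rotR_0_mult: "rotR 0 *v x = x"
  by (simp add: rotR_def vec_eq_iff forall_2 matrix_vector_mult_def sum_2)

lemma interior_convex_hull_inner_lt:
  fixes X :: "'a::euclidean_space set"
  assumes "finite X" and "w \<noteq> 0" and "y \<in> interior (convex hull X)"
  shows "\<exists>x\<in>X. y \<bullet> w < x \<bullet> w"
proof -
  have "X \<noteq> {}" using assms(3) by auto
  define m where "m = Max ((\<lambda>x. x \<bullet> w) ` X)"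
  have "m \<in> (\<lambda>x. x \<bullet> w) ` X"
    unfolding m_def using \<open>finite X\<close> \<open>X \<noteq> {}\<close> by (intro Max_in) auto
  then obtain x where x: "x \<in> X" "m = x \<bullet> w"
    by blast
  have "convex hull X \<subseteq> {z. w \<bullet> z \<le> m}"
    using \<open>finite X\<close>
    by (intro hull_minimal convex_halfspace_le) (auto simp: m_def inner_commute intro: Max_ge)
  then have "y \<in> interior {z. w \<bullet> z \<le> m}"
    using assms(3) interior_mono by blast
  then have "w \<bullet> y < m"
    using \<open>w \<noteq> 0\<close> by simp
  with x show ?thesis
    by (auto simp: inner_commute)
qed

lemma taylor_unit_interval_bound:
  fixes g g' g'' :: "real \<Rightarrow> real"
  assumes "\<And>t. (g has_real_derivative g' t) (at t)"
    and "\<And>t. (g' has_real_derivative g'' t) (at t)"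
    and "\<And>t. 0 \<le> t \<Longrightarrow> t \<le> 1 \<Longrightarrow> \<bar>g'' t\<bar> \<le> B"
  shows "\<bar>g 1 - g 0 - g' 0\<bar> \<le> B / 2"
proof -
  define diff where "diff m = (if m = 0 then g else if m = 1 then g' else g'')" for m :: nat
  have "\<exists>t>0. t < 1 \<and> g 1 = (\<Sum>m<2. diff m 0 / fact m * (1 - 0) ^ m) + diff 2 t / fact 2 * (1 - 0) ^ 2"
    using assms(1,2) by (intro Taylor_up) (auto simp: diff_def less_2_cases_iff)
  then obtain t where t: "0 < t" "t < 1" and remainder: "g 1 - g 0 - g' 0 = g'' t / 2"
    by (auto simp: diff_def numeral_2_eq_2)
  show ?thesis
    unfolding remainder using assms(3)[of t] t by simp
qed

lemma abs_pairing_le_one: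
  fixes x y c1 c2 :: real
  assumes "x\<^sup>2 + y\<^sup>2 \<le> 1" and "c1\<^sup>2 + c2\<^sup>2 = 1"
  shows "\<bar>x * c1 + y * c2\<bar> \<le> 1"
proof -
  have "(x * c1 + y * c2)\<^sup>2 + (x * c2 - y * c1)\<^sup>2 = (x\<^sup>2 + y\<^sup>2) * (c1\<^sup>2 + c2\<^sup>2)"
    by (simp add: power2_eq_square algebra_simps)
  also have "\<dots> = x\<^sup>2 + y\<^sup>2"
    using assms(2) by simp
  finally have "(x * c1 + y * c2)\<^sup>2 \<le> 1"
    using assms(1) zero_le_power2[of "x * c2 - y * c1"] by linarith
  then show ?thesis
    by (simp add: abs_square_le_1)
qed

lemma abs_quadratic_form_le:
  fixes x y z c11 c22 c33 c12 c13 c23 :: real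
  assumes "\<bar>c11\<bar> \<le> 1" "\<bar>c22\<bar> \<le> 1" "\<bar>c33\<bar> \<le> 1"
    and "\<bar>c12\<bar> \<le> 1" "\<bar>c13\<bar> \<le> 1" "\<bar>c23\<bar> \<le> 1"
  shows "\<bar>c11 * x\<^sup>2 + c22 * y\<^sup>2 + c33 * z\<^sup>2 + 2 * (c12 * x * y + c13 * x * z + c23 * y * z)\<bar>
           \<le> (\<bar>x\<bar> + \<bar>y\<bar> + \<bar>z\<bar>)\<^sup>2"
proof -
  have coeff: "c * m \<le> \<bar>m\<bar>" "- (c * m) \<le> \<bar>m\<bar>" if "\<bar>c\<bar> \<le> 1" for c m :: real
  proof -
    have "\<bar>c * m\<bar> \<le> \<bar>m\<bar>"
      using that by (simp add: abs_mult mult_left_le_one_le)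
    then show "c * m \<le> \<bar>m\<bar>" "- (c * m) \<le> \<bar>m\<bar>"
      by linarith+
  qed
  have square: "(\<bar>x\<bar> + \<bar>y\<bar> + \<bar>z\<bar>)\<^sup>2
      = \<bar>x\<^sup>2\<bar> + \<bar>y\<^sup>2\<bar> + \<bar>z\<^sup>2\<bar> + 2 * (\<bar>x * y\<bar> + \<bar>x * z\<bar> + \<bar>y * z\<bar>)"
    by (simp add: abs_mult power2_eq_square algebra_simps)
  note bounds = coeff[OF assms(1), of "x\<^sup>2"] coeff[OF assms(2), of "y\<^sup>2"]
    coeff[OF assms(3), of "z\<^sup>2"] coeff[OF assms(4), of "x * y"] coeff[OF assms(5), of "x * z"] coeff[OF assms(6), of "y * z"]
  show ?thesis
    unfolding square mult.assoc by (rule abs_leI) (use bounds in \<open>smt (verit)\<close>)+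
qed

lemma abs_mult_le_of_abs_le:
  fixes x d e :: real
  assumes "\<bar>d\<bar> \<le> e"
  shows "\<bar>x * d\<bar> \<le> e * \<bar>x\<bar>"
  using assms by (simp add: abs_mult mult.commute mult_right_mono)

locale projection_pairing =
  fixes s :: "real^3" and w :: "real^2"
  assumes norm_s_le: "norm s \<le> 1" and norm_w: "norm w = 1"
begin

definition f :: "real \<Rightarrow> real \<Rightarrow> real \<Rightarrow> real" where
  "f a th ph = (rotR a *v (projM th ph *v s)) \<bullet> w"

definition f_a :: "real \<Rightarrow> real \<Rightarrow> real \<Rightarrow> real" where
  "f_a a th ph = (rotR' a *v (projM th ph *v s)) \<bullet> w"

definition f_th :: "real \<Rightarrow> real \<Rightarrow> real \<Rightarrow> real" where
  "f_th a th ph = (rotR a *v (projM_th th ph *v s)) \<bullet> w"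

definition f_ph :: "real \<Rightarrow> real \<Rightarrow> real \<Rightarrow> real" where
  "f_ph a th ph = (rotR a *v (projM_ph th ph *v s)) \<bullet> w"

text \<open>\<open>(q \<theta>, v \<theta> \<phi>) = M(\<theta>,\<phi>) s\<close>, \<open>n \<theta> \<phi>\<close> completes it to a rotated copy of \<open>s\<close>,
  and \<open>(c1 \<alpha>, c2 \<alpha>) = R(\<alpha>)\<^sup>T w\<close>; so every partial derivative of \<open>f\<close> is a pairing
  \<open>x * c1 \<alpha> + y * c2 \<alpha>\<close> with \<open>x\<^sup>2 + y\<^sup>2 \<le> 1\<close>.\<close>

definition "p th = s$1 * cos th + s$2 * sin th"
definition "q th = - s$1 * sin th + s$2 * cos th"
definition "v th ph = - cos ph * p th + sin ph * s$3"
definition "n th ph = sin ph * p th + cos ph * s$3"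
definition "c1 a = cos a * w$1 + sin a * w$2"
definition "c2 a = - sin a * w$1 + cos a * w$2"

lemmas coordinate_defs = p_def q_def v_def n_def c1_def c2_def

definition "f_a_th a th ph = - p th * c2 a + cos ph * q th * c1 a"
definition "f_a_ph a th ph = - n th ph * c1 a"
definition "f_th_th a th ph = - q th * c1 a + cos ph * p th * c2 a"
definition "f_th_ph a th ph = sin ph * q th * c2 a"
definition "f_ph_ph a th ph = - v th ph * c2 a"

lemma f_eq: "f a th ph = q th * c1 a + v th ph * c2 a"
  and f_a_eq: "f_a a th ph = q th * c2 a - v th ph * c1 a"
  and f_th_eq: "f_th a th ph = - p th * c1 a - cos ph * q th * c2 a"
  and f_ph_eq: "f_ph a th ph = n th ph * c2 a"
  unfolding f_def f_a_def f_th_def f_ph_def rotR'_eq projM_th_eq projM_ph_eq rotR_def projM_def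
    coordinate_defs
  by (simp_all add: inner_vec_def matrix_vector_mult_def sum_2 sum_3 algebra_simps)

lemma s_coordinates_sq: "(s$1)\<^sup>2 + (s$2)\<^sup>2 + (s$3)\<^sup>2 \<le> 1"
proof -
  have "(s$1)\<^sup>2 + (s$2)\<^sup>2 + (s$3)\<^sup>2 = (norm s)\<^sup>2"
    using dot_square_norm[of s] by (simp add: inner_vec_def sum_3 power2_eq_square)
  also have "\<dots> \<le> 1"
    using norm_s_le by (simp add: abs_square_le_1)
  finally show ?thesis .
qed

lemma c_sq: "(c1 a)\<^sup>2 + (c2 a)\<^sup>2 = 1"
proof -
  have "(w$1)\<^sup>2 + (w$2)\<^sup>2 = 1"
    using norm_w power2_norm_eq_inner[of w] by (simp add: inner_vec_def sum_2 power2_eq_square)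
  then show ?thesis
    using sin_cos_squared_add[of a] unfolding c1_def c2_def by algebra
qed

lemma p_q_sq: "(p th)\<^sup>2 + (q th)\<^sup>2 = (s$1)\<^sup>2 + (s$2)\<^sup>2"
  using sin_cos_squared_add[of th] unfolding p_def q_def by algebra

lemma v_n_sq: "(v th ph)\<^sup>2 + (n th ph)\<^sup>2 = (p th)\<^sup>2 + (s$3)\<^sup>2"
  using sin_cos_squared_add[of ph] unfolding v_def n_def by algebra

lemma second_partials_bounded:
  "\<bar>f a th ph\<bar> \<le> 1" "\<bar>f_a_th a th ph\<bar> \<le> 1" "\<bar>f_a_ph a th ph\<bar> \<le> 1"
  "\<bar>f_th_th a th ph\<bar> \<le> 1" "\<bar>f_th_ph a th ph\<bar> \<le> 1" "\<bar>f_ph_ph a th ph\<bar> \<le> 1"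
proof -
  have "(cos ph)\<^sup>2 \<le> 1" "(sin ph)\<^sup>2 \<le> 1"
    by (simp_all add: abs_square_le_1)
  then have "(cos ph * x)\<^sup>2 \<le> x\<^sup>2" "(sin ph * x)\<^sup>2 \<le> x\<^sup>2" for x
    by (simp_all add: power_mult_distrib mult_left_le_one_le)
  note sq = this[of "p th"] this[of "q th"] p_q_sq[of th] v_n_sq[of th ph] s_coordinates_sq
    zero_le_power2[of "n th ph"] zero_le_power2[of "v th ph"]
    zero_le_power2[of "s$3"] zero_le_power2[of "q th"]
  have qv_sq: "(q th)\<^sup>2 + (v th ph)\<^sup>2 \<le> 1"
    and pq_sq: "(p th)\<^sup>2 + (cos ph * q th)\<^sup>2 \<le> 1"
    and qp_sq: "(q th)\<^sup>2 + (cos ph * p th)\<^sup>2 \<le> 1"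
    and n_sq: "(n th ph)\<^sup>2 \<le> 1"
    and q_sq: "(sin ph * q th)\<^sup>2 \<le> 1"
    and v_sq: "(v th ph)\<^sup>2 \<le> 1"
    using sq by linarith+
  note pairing = abs_pairing_le_one[of _ _ "c1 a" "c2 a", OF _ c_sq]
  show "\<bar>f a th ph\<bar> \<le> 1"
    unfolding f_eq by (rule pairing[OF qv_sq])
  show "\<bar>f_a_th a th ph\<bar> \<le> 1"
    using abs_pairing_le_one[of "- p th" "cos ph * q th" "c2 a" "c1 a"] pq_sq c_sq[of a]
    unfolding f_a_th_def by (simp add: add.commute)
  show "\<bar>f_a_ph a th ph\<bar> \<le> 1"
    using pairing[of "- n th ph" 0] n_sq unfolding f_a_ph_def by simp
  show "\<bar>f_th_th a th ph\<bar> \<le> 1"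
    using pairing[of "- q th" "cos ph * p th"] qp_sq unfolding f_th_th_def by simp
  show "\<bar>f_th_ph a th ph\<bar> \<le> 1"
    using pairing[of 0 "sin ph * q th"] q_sq unfolding f_th_ph_def by (simp add: mult.assoc)
  show "\<bar>f_ph_ph a th ph\<bar> \<le> 1"
    using pairing[of 0 "- v th ph"] v_sq unfolding f_ph_ph_def by simp
qed

lemma has_real_derivative_along_line:
  "((\<lambda>t. f (a + t * da) (th + t * dt) (ph + t * dp)) has_real_derivative
      f_a (a + t * da) (th + t * dt) (ph + t * dp) * da
    + f_th (a + t * da) (th + t * dt) (ph + t * dp) * dt
    + f_ph (a + t * da) (th + t * dt) (ph + t * dp) * dp) (at t)"
  unfolding f_eq f_a_eq f_th_eq f_ph_eq coordinate_defs
  by (rule derivative_eq_intros refl | simp add: algebra_simps)+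

lemma has_real_second_derivative_along_line:
  "((\<lambda>t. f_a (a + t * da) (th + t * dt) (ph + t * dp) * da
        + f_th (a + t * da) (th + t * dt) (ph + t * dp) * dt
        + f_ph (a + t * da) (th + t * dt) (ph + t * dp) * dp) has_real_derivative
      - f (a + t * da) (th + t * dt) (ph + t * dp) * da\<^sup>2
    + f_th_th (a + t * da) (th + t * dt) (ph + t * dp) * dt\<^sup>2
    + f_ph_ph (a + t * da) (th + t * dt) (ph + t * dp) * dp\<^sup>2
    + 2 * (f_a_th (a + t * da) (th + t * dt) (ph + t * dp) * da * dt
         + f_a_ph (a + t * da) (th + t * dt) (ph + t * dp) * da * dp
         + f_th_ph (a + t * da) (th + t * dt) (ph + t * dp) * dt * dp)) (at t)"
  unfolding f_eq f_a_eq f_th_eq f_ph_eq f_a_th_def f_a_ph_def f_th_th_def f_th_ph_def f_ph_ph_def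
    coordinate_defs
  by (rule derivative_eq_intros refl | simp add: algebra_simps power2_eq_square)+

lemma f_taylor_bound:
  "\<bar>f a th ph - f a0 th0 ph0
     - (f_a a0 th0 ph0 * (a - a0) + f_th a0 th0 ph0 * (th - th0) + f_ph a0 th0 ph0 * (ph - ph0))\<bar>
   \<le> (\<bar>a - a0\<bar> + \<bar>th - th0\<bar> + \<bar>ph - ph0\<bar>)\<^sup>2 / 2"
proof -
  note line = has_real_derivative_along_line has_real_second_derivative_along_line
  show ?thesis
    using taylor_unit_interval_bound[OF line[where a = a0 and da = "a - a0" and th = th0
          and dt = "th - th0" and ph = ph0 and dp = "ph - ph0"] abs_quadratic_form_le]
    by (simp add: second_partials_bounded)
qed

lemma f_lower_bound:
  assumes "\<bar>a - a0\<bar> \<le> e" and "\<bar>th - th0\<bar> \<le> e" and "\<bar>ph - ph0\<bar> \<le> e"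
  shows "f a0 th0 ph0 - e * (\<bar>f_a a0 th0 ph0\<bar> + \<bar>f_th a0 th0 ph0\<bar> + \<bar>f_ph a0 th0 ph0\<bar>)
           - 9 / 2 * e\<^sup>2 \<le> f a th ph"
proof -
  have "(\<bar>a - a0\<bar> + \<bar>th - th0\<bar> + \<bar>ph - ph0\<bar>)\<^sup>2 \<le> (3 * e)\<^sup>2"
    using assms by (intro power_mono) auto
  then show ?thesis
    using f_taylor_bound[of a th ph a0 th0 ph0] abs_mult_le_of_abs_le[OF assms(1), of "f_a a0 th0 ph0"]
      abs_mult_le_of_abs_le[OF assms(2), of "f_th a0 th0 ph0"]
      abs_mult_le_of_abs_le[OF assms(3), of "f_ph a0 th0 ph0"]
    unfolding abs_le_iff by (simp add: algebra_simps)
qed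

lemma f_upper_bound:
  assumes "\<bar>th - th0\<bar> \<le> e" and "\<bar>ph - ph0\<bar> \<le> e"
  shows "f a th ph \<le> f a th0 ph0 + e * (\<bar>f_th a th0 ph0\<bar> + \<bar>f_ph a th0 ph0\<bar>) + 2 * e\<^sup>2"
proof -
  have "(\<bar>a - a\<bar> + \<bar>th - th0\<bar> + \<bar>ph - ph0\<bar>)\<^sup>2 \<le> (2 * e)\<^sup>2"
    using assms by (intro power_mono) auto
  then show ?thesis
    using f_taylor_bound[of a th ph a th0 ph0]
      abs_mult_le_of_abs_le[OF assms(1), of "f_th a th0 ph0"]
      abs_mult_le_of_abs_le[OF assms(2), of "f_ph a th0 ph0"]
    unfolding abs_le_iff by (simp add: algebra_simps)
qed

end

theorem theorem4p1:
  fixes P :: "(real^3) set" and S :: "real^3" and w :: "real^2"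
    and th1b ph1b th2b ph2b ab eps :: real
  assumes "polyhedron P" and "pointsymmetric P" and "has_radius_one P"
    and "S \<in> P"
    and "eps > 0" and "norm w = 1"
    and "(rotR ab *v (projM th1b ph1b *v S)) \<bullet> w
          - eps * (\<bar>(rotR' ab *v (projM th1b ph1b *v S)) \<bullet> w\<bar>
                 + \<bar>(rotR ab *v (projM_th th1b ph1b *v S)) \<bullet> w\<bar>
                 + \<bar>(rotR ab *v (projM_ph th1b ph1b *v S)) \<bullet> w\<bar>)
          - 9 / 2 * eps\<^sup>2
        > Max ((\<lambda>Q. (projM th2b ph2b *v Q) \<bullet> w
                 + eps * (\<bar>(projM_th th2b ph2b *v Q) \<bullet> w\<bar>
                        + \<bar>(projM_ph th2b ph2b *v Q) \<bullet> w\<bar>)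
                 + 2 * eps\<^sup>2) ` P)"
  shows "\<not> (\<exists>th1 ph1 th2 ph2 a.
             \<bar>th1 - th1b\<bar> \<le> eps \<and> \<bar>ph1 - ph1b\<bar> \<le> eps \<and>
             \<bar>th2 - th2b\<bar> \<le> eps \<and> \<bar>ph2 - ph2b\<bar> \<le> eps \<and>
             \<bar>a - ab\<bar> \<le> eps \<and>
             (\<lambda>x. rotR a *v (projM th1 ph1 *v x)) ` P
               \<subseteq> interior (convex hull ((\<lambda>x. projM th2 ph2 *v x) ` P)))"
proof (intro notI, elim exE conjE)
  fix th1 ph1 th2 ph2 a
  assume close: "\<bar>th1 - th1b\<bar> \<le> eps" "\<bar>ph1 - ph1b\<bar> \<le> eps"
      "\<bar>th2 - th2b\<bar> \<le> eps" "\<bar>ph2 - ph2b\<bar> \<le> eps" "\<bar>a - ab\<bar> \<le> eps"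
    and "(\<lambda>x. rotR a *v (projM th1 ph1 *v x)) ` P
           \<subseteq> interior (convex hull ((\<lambda>x. projM th2 ph2 *v x) ` P))"
  then have inside: "rotR a *v (projM th1 ph1 *v S) \<in> interior (convex hull ((\<lambda>x. projM th2 ph2 *v x) ` P))"
    using \<open>S \<in> P\<close> by blast
  have "finite P"
    using \<open>polyhedron P\<close> by (simp add: polyhedron_def)
  moreover have "w \<noteq> 0"
    using \<open>norm w = 1\<close> by auto
  ultimately obtain Q where "Q \<in> P"
    and beaten: "(rotR a *v (projM th1 ph1 *v S)) \<bullet> w < (projM th2 ph2 *v Q) \<bullet> w"
    using interior_convex_hull_inner_lt[OF _ _ inside] by blast
  interpret S: projection_pairing S w
    using assms(3,4,6) by unfold_locales (auto simp: has_radius_one_def)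
  interpret Q: projection_pairing Q w
    using assms(3,6) \<open>Q \<in> P\<close> by unfold_locales (auto simp: has_radius_one_def)
  note S.f_lower_bound[OF close(5,1,2)]
  moreover note Q.f_upper_bound[OF close(3,4), of 0]
  moreover have "(projM th2b ph2b *v Q) \<bullet> w
                 + eps * (\<bar>(projM_th th2b ph2b *v Q) \<bullet> w\<bar> + \<bar>(projM_ph th2b ph2b *v Q) \<bullet> w\<bar>)
                 + 2 * eps\<^sup>2
      \<le> Max ((\<lambda>Q. (projM th2b ph2b *v Q) \<bullet> w
                 + eps * (\<bar>(projM_th th2b ph2b *v Q) \<bullet> w\<bar> + \<bar>(projM_ph th2b ph2b *v Q) \<bullet> w\<bar>)
                 + 2 * eps\<^sup>2) ` P)"
    using \<open>finite P\<close> \<open>Q \<in> P\<close> by (intro Max_ge) auto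
  ultimately show False
    using assms(7) beaten
    unfolding S.f_def S.f_a_def S.f_th_def S.f_ph_def Q.f_def Q.f_th_def Q.f_ph_def rotR_0_mult
    by linarith
qed

end
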